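(* Assume (A1) and (A2). Then there exists a constant $c>0$ such that for all $\mathbf{z}\in\mathbb{W}(b^* )^2$ and $\boldsymbol\vartheta\in I_{2\pi}^2$, $$\left|(\Gamma(\mathbf{z})-\Gamma(\mathbf{z}+\boldsymbol\vartheta))\cdot\Big(\frac{\partial\Gamma}{\partial z_0}\times\frac{\partial\Gamma}{\partial z_1}\Big)(\mathbf{z}+\boldsymbol\vartheta)\right|\le c\,(\zeta(\boldsymbol\vartheta))^2.$$
   Context: $I_{2\pi}=[0,2\pi)$. Let $\Gamma=[\gamma_0,\gamma_1,\gamma_2]^T:\mathbb{R}^2\to\mathbb{R}^3$ have $2\pi$-biperiodic differentiable components, with $\Gamma|_{I_{2\pi}^2}$ parametrizing the boundary of a bounded open region in $\mathbb{R}^3$ that is $C^\infty$-diffeomorphic to a torus. For $\mathbf{a},\mathbf{b}\in\mathbb{C}^3$, $\mathbf{a}\cdot\mathbf{b}=\sum_ja_jb_j$ (no conjugation), $\mathbf{a}\times\mathbf{b}=[a_1b_2-a_2b_1,a_2b_0-a_0b_2,a_0b_1-a_1b_0]^T$, $\|\mathbf{a}\|_2=(\sum_j|a_j|^2)^{1/2}$; for matrices $\|\cdot\|_2$ is the induced operator norm. For $\boldsymbol\theta\in\mathbb{R}^2$, $\zeta(\boldsymbol\theta)=\sqrt{\mathrm{dist}(\theta_0,2\pi\mathbb{Z})^2+\mathrm{dist}(\theta_1,2\pi\mathbb{Z})^2}$ (for $\boldsymbol\theta\in I_{2\pi}^2$ this is $\sqrt{(\min\{\theta_0,2\pi-\theta_0\})^2+(\min\{\theta_1,2\pi-\theta_1\})^2}$).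 For $r>0$, $\mathbb{W}(r)=\{z\in\mathbb{C}:|\mathrm{Im}\,z|<r\}$. (A1): there is $C_0>0$ with $\|\Gamma(\boldsymbol\theta)-\Gamma(\boldsymbol\eta)\|_2\ge C_0\zeta(\boldsymbol\theta-\boldsymbol\eta)$ for all $\boldsymbol\theta,\boldsymbol\eta\in I_{2\pi}^2$. (A2): there is $R_0>0$ such that for each $j$ the ($2\pi$-biperiodic) function $\gamma_j$ extends analytically to the closure of $\mathbb{W}(R_0)^2\subset\mathbb{C}^2$ (extensions still denoted $\gamma_j$, $\Gamma$; $\frac{\partial\Gamma}{\partial z_\iota}=[\frac{\partial\gamma_0}{\partial z_\iota},\frac{\partial\gamma_1}{\partial z_\iota},\frac{\partial\gamma_2}{\partial z_\iota}]^T$ are complex partial derivatives). For $\mathbf{z}=[z_0,z_1]$, $\mathrm{Re}(\mathbf{z})=[\mathrm{Re}\,z_0,\mathrm{Re}\,z_1]$; $D\gamma_j$ is the complex gradient and $\mathbf{H}_j$ the $2\times2$ complex Hessian of $\gamma_j$. Let $M_{0,j}=\sup_{\mathbf{z}\in\mathbb{W}(R_0)^2}\|D\gamma_j(\mathbf{z})+D\gamma_j(\mathrm{Re}(\mathbf{z}))\|_2$, $M_{1,j}=\sup_{\mathbf{z}\in\mathbb{W}(R_0)^2}\|\mathbf{H}_j(\mathbf{z})\|_2$, $M_0=(\sum_jM_{0,j}^2)^{1/2}$, $M_1=(\sum_jM_{1,j}^2)^{1/2}$. Fix $b$ with $0<b<\min\{\frac{C_0^2}{\sqrt2M_0M_1},\frac{R_0}{2}\}$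 and let $b^*=\frac12\big(b+\min\{\frac{C_0^2}{\sqrt2M_0M_1},\frac{R_0}{2}\}\big)$. *)

theory Defs
  imports "HOL-Analysis.Analysis"
begin

definition dist2pi :: "real \<Rightarrow> real" where
  "dist2pi t = infdist t (range (\<lambda>k::int. 2 * pi * of_int k))"

definition zeta :: "real \<times> real \<Rightarrow> real" where
  "zeta \<theta> = sqrt ((dist2pi (fst \<theta>))\<^sup>2 + (dist2pi (snd \<theta>))\<^sup>2)"

definition I2pi :: "real set" where
  "I2pi = {0..<2*pi}"

definition strip :: "real \<Rightarrow> complex set" where
  "strip r = {z. \<bar>Im z\<bar> < r}"

fun Ck_on :: "nat \<Rightarrow> (real^3) set \<Rightarrow> (real^3 \<Rightarrow> real^3) \<Rightarrow> bool" where
  "Ck_on 0 S f = continuous_on S f"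
| "Ck_on (Suc k) S f =
     (f differentiable_on S \<and>
      (\<forall>i. Ck_on k S (\<lambda>x. frechet_derivative f (at x) (axis i 1))))"

definition smooth_on :: "(real^3) set \<Rightarrow> (real^3 \<Rightarrow> real^3) \<Rightarrow> bool" where
  "smooth_on S f = (\<forall>k. Ck_on k S f)"

definition diffeomorphic_smooth :: "(real^3) set \<Rightarrow> (real^3) set \<Rightarrow> bool" where
  "diffeomorphic_smooth S T =
     (\<exists>f. bij_betw f S T \<and> smooth_on S f \<and> smooth_on T (inv_into S f))"

definition solid_torus :: "(real^3) set" where
  "solid_torus = {x. (sqrt ((x$1)\<^sup>2 + (x$2)\<^sup>2) - 2)\<^sup>2 + (x$3)\<^sup>2 < 1}"

definition holo2_on :: "(complex \<times> complex) set \<Rightarrow> (complex \<times> complex \<Rightarrow> complex) \<Rightarrow> bool" where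
  "holo2_on S f = (\<forall>z\<in>S. \<exists>a b. (f has_derivative (\<lambda>h. a * fst h + b * snd h)) (at z))"

definition pd0 :: "(complex \<times> complex \<Rightarrow> complex) \<Rightarrow> complex \<times> complex \<Rightarrow> complex" where
  "pd0 f z = deriv (\<lambda>w. f (w, snd z)) (fst z)"

definition pd1 :: "(complex \<times> complex \<Rightarrow> complex) \<Rightarrow> complex \<times> complex \<Rightarrow> complex" where
  "pd1 f z = deriv (\<lambda>w. f (fst z, w)) (snd z)"

definition cnorm2 :: "complex \<times> complex \<Rightarrow> real" where
  "cnorm2 v = sqrt ((cmod (fst v))\<^sup>2 + (cmod (snd v))\<^sup>2)"

definition Re2 :: "complex \<times> complex \<Rightarrow> complex \<times> complex" where
  "Re2 z = (complex_of_real (Re (fst z)), complex_of_real (Re (snd z)))"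

definition cgrad :: "(complex \<times> complex \<Rightarrow> complex) \<Rightarrow> complex \<times> complex \<Rightarrow> complex \<times> complex" where
  "cgrad f z = (pd0 f z, pd1 f z)"

definition hess_opnorm :: "(complex \<times> complex \<Rightarrow> complex) \<Rightarrow> complex \<times> complex \<Rightarrow> real" where
  "hess_opnorm f z =
     (SUP v\<in>{v. cnorm2 v = 1}.
        cnorm2 (pd0 (pd0 f) z * fst v + pd1 (pd0 f) z * snd v,
                pd0 (pd1 f) z * fst v + pd1 (pd1 f) z * snd v))"

definition cdot :: "complex^3 \<Rightarrow> complex^3 \<Rightarrow> complex" where
  "cdot a b = (\<Sum>j\<in>UNIV. a$j * b$j)"

text \<open>Paper indices 0,1,2 correspond to 1,2,3 here.\<close>
definition ccross :: "complex^3 \<Rightarrow> complex^3 \<Rightarrow> complex^3" where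
  "ccross a b = vector [a$2 * b$3 - a$3 * b$2, a$3 * b$1 - a$1 * b$3, a$1 * b$2 - a$2 * b$1]"

definition dG0 :: "(complex \<times> complex \<Rightarrow> complex^3) \<Rightarrow> complex \<times> complex \<Rightarrow> complex^3" where
  "dG0 G z = (\<chi> j. pd0 (\<lambda>w. G w $ j) z)"

definition dG1 :: "(complex \<times> complex \<Rightarrow> complex^3) \<Rightarrow> complex \<times> complex \<Rightarrow> complex^3" where
  "dG1 G z = (\<chi> j. pd1 (\<lambda>w. G w $ j) z)"

definition M0c :: "(complex \<times> complex \<Rightarrow> complex^3) \<Rightarrow> real \<Rightarrow> real" where
  "M0c G R0 = sqrt (\<Sum>j\<in>UNIV.
     (SUP z\<in>strip R0 \<times> strip R0.
        cnorm2 (cgrad (\<lambda>w. G w $ j) z + cgrad (\<lambda>w. G w $ j) (Re2 z)))\<^sup>2)"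

definition M1c :: "(complex \<times> complex \<Rightarrow> complex^3) \<Rightarrow> real \<Rightarrow> real" where
  "M1c G R0 = sqrt (\<Sum>j\<in>UNIV.
     (SUP z\<in>strip R0 \<times> strip R0. hess_opnorm (\<lambda>w. G w $ j) z)\<^sup>2)"

definition bstar :: "(complex \<times> complex \<Rightarrow> complex^3) \<Rightarrow> real \<Rightarrow> real \<Rightarrow> real \<Rightarrow> real" where
  "bstar G C0 R0 b =
     (b + min (C0\<^sup>2 / (sqrt 2 * M0c G R0 * M1c G R0)) (R0 / 2)) / 2"

end

theory Submission
  imports Defs "HOL-Complex_Analysis.Complex_Analysis"
begin

(* The holomorphic extension G is 2pi-periodic in each variable on the whole strip (identity
   theorem), hence bounded on a slightly narrower strip, and Cauchy estimates then bound its
   first and second derivatives there. Reducing theta modulo 2pi to s with |s_i| <= zeta(theta),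
   Taylor's formula along the segment from z + theta to z writes G(z) - G(z + theta) as a
   combination of the two partial derivatives at z + theta plus a remainder of order
   zeta(theta)^2. The linear part is annihilated by the cross product of these partial
   derivatives, so only the remainder survives. *)

lemma open_strip: "open (strip r)"
  unfolding strip_def by (auto intro!: open_Collect_less continuous_intros)

lemma convex_strip: "convex (strip r)"
proof -
  have "strip r = {z. Im z < r} \<inter> {z. Im z > - r}"
    by (auto simp: strip_def)
  then show ?thesis
    by (simp add: convex_Int convex_halfspace_Im_lt convex_halfspace_Im_gt)
qed

lemma strip_add_Reals [simp]: "c \<in> \<real> \<Longrightarrow> w + c \<in> strip r \<longleftrightarrow> w \<in> strip r"
  by (auto simp: strip_def elim!: Reals_cases)

lemma strip_diff_Reals [simp]: "c \<in> \<real> \<Longrightarrow> w - c \<in> strip r \<longleftrightarrow> w \<in> strip r"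
  by (auto simp: strip_def elim!: Reals_cases)

lemma Reals_subset_strip: "0 < r \<Longrightarrow> \<real> \<subseteq> strip r"
  by (auto simp: strip_def elim!: Reals_cases)

lemma strip_mono: "r \<le> s \<Longrightarrow> strip r \<subseteq> strip s"
  by (auto simp: strip_def)

lemma cball_subset_strip:
  assumes "x \<in> strip a" "a + e \<le> r"
  shows "cball x e \<subseteq> strip r"
proof
  fix y assume "y \<in> cball x e"
  then have "\<bar>Im y - Im x\<bar> \<le> e"
    using abs_Im_le_cmod[of "y - x"] by (simp add: dist_norm norm_minus_commute)
  then show "y \<in> strip r" using assms by (auto simp: strip_def)
qed

lemma add_mult_real_in_strip:
  assumes "w \<in> strip \<rho>" "\<bar>u\<bar> \<le> 1" "t \<in> strip (a - \<rho>)"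
  shows "w + t * of_real u \<in> strip a"
proof -
  have "\<bar>Im t * u\<bar> \<le> \<bar>Im t\<bar>"
    using assms(2) by (simp add: abs_mult mult_left_le)
  then show ?thesis using assms(1,3) by (auto simp: strip_def)
qed

lemma holomorphic_on_strip_eq_zero:
  assumes "0 < r" "f holomorphic_on strip r" "\<And>x. f (of_real x) = 0" "w \<in> strip r"
  shows "f w = 0"
proof (rule analytic_continuation[OF assms(2) open_strip _ Reals_subset_strip[OF assms(1)]])
  show "connected (strip r)" by (rule convex_connected[OF convex_strip])
  show "(0::complex) islimpt \<real>"
  proof (unfold islimpt_approachable, intro allI impI)
    fix e :: real assume "0 < e"
    then show "\<exists>x::complex\<in>\<real>. x \<noteq> 0 \<and> dist x 0 < e"
      by (intro bexI[of _ "complex_of_real (e/2)"]) auto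
  qed
  show "0 \<in> strip r" using assms(1) by (simp add: strip_def)
qed (use assms in \<open>auto elim: Reals_cases\<close>)

lemma holo2_on_subset: "holo2_on V g \<Longrightarrow> W \<subseteq> V \<Longrightarrow> holo2_on W g"
  unfolding holo2_on_def by blast

lemma holo2_on_imp_continuous_on: "holo2_on V g \<Longrightarrow> continuous_on V g"
  unfolding holo2_on_def
  by (meson continuous_at_imp_continuous_on has_derivative_continuous)

lemma holo2_on_swap:
  assumes "holo2_on (A \<times> B) g"
  shows "holo2_on (B \<times> A) (\<lambda>z. g (snd z, fst z))"
  unfolding holo2_on_def
proof
  fix z assume "z \<in> B \<times> A"
  then have "(snd z, fst z) \<in> A \<times> B" by auto
  then obtain a b where g: "(g has_derivative (\<lambda>h. a * fst h + b * snd h)) (at (snd z, fst z))"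
    using assms unfolding holo2_on_def by blast
  have "((\<lambda>z. (snd z, fst z)) has_derivative (\<lambda>h. (snd h, fst h))) (at z)"
    by (auto intro!: derivative_eq_intros)
  from has_derivative_compose[OF this g]
  have "((\<lambda>z. g (snd z, fst z)) has_derivative (\<lambda>h. b * fst h + a * snd h)) (at z)"
    by (simp add: add.commute)
  then show "\<exists>a b. ((\<lambda>z. g (snd z, fst z)) has_derivative (\<lambda>h. a * fst h + b * snd h)) (at z)"
    by blast
qed

lemma has_field_derivative_holo2_compose:
  assumes g: "(g has_derivative (\<lambda>h. a * fst h + b * snd h)) (at (p t, q t))"
    and p: "(p has_field_derivative dp) (at t within S)"
    and q: "(q has_field_derivative dq) (at t within S)"
  shows "((\<lambda>t. g (p t, q t)) has_field_derivative (a * dp + b * dq)) (at t within S)"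
proof -
  have "((\<lambda>t. (p t, q t)) has_derivative (\<lambda>h. (dp * h, dq * h))) (at t within S)"
    using p q unfolding has_field_derivative_def by (rule has_derivative_Pair)
  from diff_chain_within[OF this has_derivative_at_withinI[OF g]]
  show ?thesis
    unfolding has_field_derivative_def o_def by (rule has_derivative_eq_rhs) (auto simp: algebra_simps)
qed

lemma holomorphic_on_holo2_compose:
  assumes "holo2_on V g" "p holomorphic_on S" "q holomorphic_on S" "\<And>t. t \<in> S \<Longrightarrow> (p t, q t) \<in> V"
  shows "(\<lambda>t. g (p t, q t)) holomorphic_on S"
  unfolding holomorphic_on_def
proof
  fix t assume "t \<in> S"
  then obtain a b where "(g has_derivative (\<lambda>h. a * fst h + b * snd h)) (at (p t, q t))"
    using assms(1,4) unfolding holo2_on_def by blast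
  moreover obtain dp dq where "(p has_field_derivative dp) (at t within S)" "(q has_field_derivative dq) (at t within S)"
    using assms(2,3) \<open>t \<in> S\<close> unfolding holomorphic_on_def field_differentiable_def by blast
  ultimately show "(\<lambda>t. g (p t, q t)) field_differentiable at t within S"
    unfolding field_differentiable_def by (blast intro: has_field_derivative_holo2_compose)
qed

lemma pd0_pd1_eq:
  assumes "(g has_derivative (\<lambda>h. a * fst h + b * snd h)) (at z)"
  shows "pd0 g z = a" "pd1 g z = b"
proof -
  have "((\<lambda>w. g (w, snd z)) has_field_derivative (a * 1 + b * 0)) (at (fst z))"
    using assms by (intro has_field_derivative_holo2_compose) (auto intro!: derivative_eq_intros)
  then show "pd0 g z = a" unfolding pd0_def by (simp add: DERIV_imp_deriv)
  have "((\<lambda>w. g (fst z, w)) has_field_derivative (a * 0 + b * 1)) (at (snd z))"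
    using assms by (intro has_field_derivative_holo2_compose) (auto intro!: derivative_eq_intros)
  then show "pd1 g z = b" unfolding pd1_def by (simp add: DERIV_imp_deriv)
qed

lemma has_field_derivative_holo2_line:
  assumes "holo2_on V g" "(w0, w1) \<in> V"
  shows "((\<lambda>t. g (w0 + t * c0, w1 + t * c1)) has_field_derivative
            (pd0 g (w0, w1) * c0 + pd1 g (w0, w1) * c1)) (at 0)"
proof -
  obtain a b where g: "(g has_derivative (\<lambda>h. a * fst h + b * snd h)) (at (w0, w1))"
    using assms unfolding holo2_on_def by blast
  have "((\<lambda>t. g (w0 + t * c0, w1 + t * c1)) has_field_derivative (a * c0 + b * c1)) (at 0)"
    using g by (intro has_field_derivative_holo2_compose) (auto intro!: derivative_eq_intros)
  then show ?thesis using pd0_pd1_eq[OF g] by simp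
qed

lemma holo2_periodic_fst:
  assumes "0 < R" and hol: "holo2_on (strip R \<times> strip R) g"
    and per: "\<And>x y. g (of_real (x + 2*pi), of_real y) = g (of_real x, of_real y)"
    and "w0 \<in> strip R" "w1 \<in> strip R"
  shows "g (w0 + of_real (2*pi), w1) = g (w0, w1)"
proof -
  have real_in_strip: "of_real x \<in> strip R" for x
    using Reals_subset_strip[OF \<open>0 < R\<close>] by auto
  have per_strip_Reals: "g (w + of_real (2*pi), of_real y) = g (w, of_real y)" if "w \<in> strip R" for w y
  proof -
    have "g (w + of_real (2*pi), of_real y) - g (w, of_real y) = 0"
    proof (rule holomorphic_on_strip_eq_zero[OF \<open>0 < R\<close> _ _ that, where f = "\<lambda>t. g (t + _, _) - g (t, _)"])
      show "(\<lambda>t. g (t + of_real (2*pi), of_real y) - g (t, of_real y)) holomorphic_on strip R"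
        using real_in_strip by (intro holomorphic_on_diff holomorphic_on_holo2_compose[OF hol] holomorphic_intros) auto
    next
      fix x
      show "g (of_real x + of_real (2*pi), of_real y) - g (of_real x, of_real y) = 0"
        using per[of x y] by simp
    qed
    then show ?thesis by simp
  qed
  have "g (w0 + of_real (2*pi), w1) - g (w0, w1) = 0"
  proof (rule holomorphic_on_strip_eq_zero[OF \<open>0 < R\<close> _ _ \<open>w1 \<in> strip R\<close>, where f = "\<lambda>t. g (_, t) - g (_, t)"])
    show "(\<lambda>t. g (w0 + of_real (2*pi), t) - g (w0, t)) holomorphic_on strip R"
      using \<open>w0 \<in> strip R\<close>
      by (intro holomorphic_on_diff holomorphic_on_holo2_compose[OF hol] holomorphic_intros) auto
  next
    fix y
    show "g (w0 + of_real (2*pi), of_real y) - g (w0, of_real y) = 0"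
      using per_strip_Reals[OF \<open>w0 \<in> strip R\<close>, of y] by simp
  qed
  then show ?thesis by simp
qed

lemma holo2_periodic_snd:
  assumes "0 < R" and hol: "holo2_on (strip R \<times> strip R) g"
    and per: "\<And>x y. g (of_real x, of_real (y + 2*pi)) = g (of_real x, of_real y)"
    and "w0 \<in> strip R" "w1 \<in> strip R"
  shows "g (w0, w1 + of_real (2*pi)) = g (w0, w1)"
  using holo2_periodic_fst[OF \<open>0 < R\<close> holo2_on_swap[OF hol], of w1 w0] per assms(4,5) by simp

lemma strip_periodic_int:
  fixes h :: "complex \<Rightarrow> 'a"
  assumes per: "\<And>w. w \<in> strip r \<Longrightarrow> h (w + of_real (2*pi)) = h w" and "w \<in> strip r"
  shows "h (w + of_real (2*pi * of_int m)) = h w"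
proof -
  have "\<forall>w\<in>strip r. h (w + of_real (2*pi * of_int m)) = h w"
  proof (induction m rule: int_induct[where k = 0])
    case base
    show ?case by simp
  next
    case (step1 i)
    show ?case
    proof
      fix w assume "w \<in> strip r"
      have "h (w + of_real (2*pi * of_int (i + 1))) = h ((w + of_real (2*pi * of_int i)) + of_real (2*pi))"
        by (simp add: algebra_simps)
      also have "\<dots> = h w" using per step1(2) \<open>w \<in> strip r\<close> by simp
      finally show "h (w + of_real (2*pi * of_int (i + 1))) = h w" .
    qed
  next
    case (step2 i)
    show ?case
    proof
      fix w assume "w \<in> strip r"
      have "h (w + of_real (2*pi * of_int (i - 1))) = h ((w - of_real (2*pi)) + of_real (2*pi * of_int i))"
        by (simp add: algebra_simps)
      also have "\<dots> = h (w - of_real (2*pi))"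
        using step2(2) \<open>w \<in> strip r\<close> by simp
      also have "\<dots> = h w"
        using per[of "w - of_real (2*pi)"] \<open>w \<in> strip r\<close> by simp
      finally show "h (w + of_real (2*pi * of_int (i - 1))) = h w" .
    qed
  qed
  then show ?thesis using \<open>w \<in> strip r\<close> by blast
qed

lemma abs_sub_round_le_pi: "\<bar>t - 2*pi * of_int (round (t/(2*pi)))\<bar> \<le> pi"
proof -
  have "\<bar>t - 2*pi * of_int (round (t/(2*pi)))\<bar> = 2*pi * \<bar>of_int (round (t/(2*pi))) - t/(2*pi)\<bar>"
    by (simp add: abs_mult_pos' field_simps abs_minus_commute)
  also have "\<dots> \<le> 2*pi * (1/2)"
    by (intro mult_left_mono of_int_round_abs_le) simp
  finally show ?thesis by simp
qed

lemma abs_sub_round_le_dist2pi: "\<bar>t - 2*pi * of_int (round (t/(2*pi)))\<bar> \<le> dist2pi t"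
  unfolding dist2pi_def
proof (subst infdist_notempty, simp, rule cINF_greatest, simp)
  fix a assume "a \<in> range (\<lambda>k::int. 2 * pi * of_int k)"
  then obtain k :: int where "a = 2 * pi * of_int k" by blast
  have "\<bar>t - 2*pi * of_int (round (t/(2*pi)))\<bar> = 2*pi * \<bar>t/(2*pi) - of_int (round (t/(2*pi)))\<bar>"
    by (simp add: abs_mult_pos' field_simps)
  also have "\<dots> \<le> 2*pi * \<bar>t/(2*pi) - of_int k\<bar>"
    by (intro mult_left_mono round_diff_minimal) simp
  also have "\<dots> = dist t a"
    using \<open>a = _\<close> by (simp add: dist_real_def abs_mult_pos' field_simps)
  finally show "\<bar>t - 2*pi * of_int (round (t/(2*pi)))\<bar> \<le> dist t a" .
qed

lemma strip_periodic2_int: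
  assumes per0: "\<And>w0 w1. w0 \<in> strip R \<Longrightarrow> w1 \<in> strip R \<Longrightarrow>
      g (w0 + of_real (2*pi), w1) = g (w0, w1)"
    and per1: "\<And>w0 w1. w0 \<in> strip R \<Longrightarrow> w1 \<in> strip R \<Longrightarrow>
      g (w0, w1 + of_real (2*pi)) = g (w0, w1)"
    and "w0 \<in> strip R" "w1 \<in> strip R"
  shows "g (w0 + of_real (2*pi * of_int m0), w1 + of_real (2*pi * of_int m1)) = g (w0, w1)"
proof -
  have "g (w0 + of_real (2*pi * of_int m0), w1 + of_real (2*pi * of_int m1))
      = g (w0, w1 + of_real (2*pi * of_int m1))"
    by (rule strip_periodic_int[where h = "\<lambda>w. g (w, _)", OF per0]) (use assms(3,4) in simp_all)
  also have "\<dots> = g (w0, w1)"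
    by (rule strip_periodic_int[where h = "\<lambda>w. g (w0, w)", OF per1]) (use assms(3,4) in simp_all)
  finally show ?thesis .
qed

lemma bounded_on_strip_if_periodic:
  fixes g :: "complex \<times> complex \<Rightarrow> 'a::real_normed_vector"
  assumes cont: "continuous_on (strip R \<times> strip R) g" and "a < R"
    and per0: "\<And>w0 w1. w0 \<in> strip R \<Longrightarrow> w1 \<in> strip R \<Longrightarrow>
      g (w0 + of_real (2*pi), w1) = g (w0, w1)"
    and per1: "\<And>w0 w1. w0 \<in> strip R \<Longrightarrow> w1 \<in> strip R \<Longrightarrow>
      g (w0, w1 + of_real (2*pi)) = g (w0, w1)"
  shows "\<exists>K. \<forall>z\<in>strip a \<times> strip a. norm (g z) \<le> K"
proof -
  define Q where "Q = cbox (Complex (-pi) (-a)) (Complex pi a)"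
  have "Q \<subseteq> strip R"
    using \<open>a < R\<close> by (auto simp: Q_def in_cbox_complex_iff strip_def)
  then have "compact (g ` (Q \<times> Q))"
    unfolding Q_def
    by (intro compact_continuous_image continuous_on_subset[OF cont] compact_Times compact_cbox) auto
  then obtain K where K: "\<And>y. y \<in> g ` (Q \<times> Q) \<Longrightarrow> norm y \<le> K"
    using compact_imp_bounded bounded_iff by metis
  define m :: "complex \<Rightarrow> int" where "m w = round (Re w/(2*pi))" for w
  have reduce: "w - of_real (2*pi * of_int (m w)) \<in> Q" if "w \<in> strip a" for w
    using abs_sub_round_le_pi[of "Re w"] that by (auto simp: Q_def m_def in_cbox_complex_iff strip_def)
  have "norm (g (w0, w1)) \<le> K" if "w0 \<in> strip a" "w1 \<in> strip a" for w0 w1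
  proof -
    define v0 where "v0 = w0 - of_real (2*pi * of_int (m w0))"
    define v1 where "v1 = w1 - of_real (2*pi * of_int (m w1))"
    have "v0 \<in> Q" "v1 \<in> Q" unfolding v0_def v1_def using reduce that by auto
    then have "v0 \<in> strip R" "v1 \<in> strip R" using \<open>Q \<subseteq> strip R\<close> by auto
    from strip_periodic2_int[OF per0 per1 this, of "m w0" "m w1"]
    have "g (w0, w1) = g (v0, v1)" by (simp add: v0_def v1_def)
    then show ?thesis using K \<open>v0 \<in> Q\<close> \<open>v1 \<in> Q\<close> by auto
  qed
  then show ?thesis by auto
qed

lemma deriv_bound_half_strip:
  assumes hol: "\<psi> holomorphic_on strip r" and bnd: "\<And>t. t \<in> strip r \<Longrightarrow> cmod (\<psi> t) \<le> K"
    and x: "x \<in> strip (r/2)" and "0 < n"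
  shows "cmod ((deriv ^^ n) \<psi> x) \<le> fact n * (K + 1) / (r/2)^n"
proof (rule Cauchy_higher_deriv_bound)
  have sub: "cball x (r/2) \<subseteq> strip r"
    by (rule cball_subset_strip[OF x]) simp
  then show "\<psi> holomorphic_on ball x (r/2)"
    using hol ball_subset_cball holomorphic_on_subset by blast
  show "continuous_on (cball x (r/2)) \<psi>"
    using hol sub holomorphic_on_imp_continuous_on continuous_on_subset by blast
  show "\<psi> w \<in> ball 0 (K + 1)" if "w \<in> ball x (r/2)" for w
  proof -
    have "w \<in> strip r" using sub that by auto
    then show ?thesis using bnd by (fastforce simp: dist_norm)
  qed
  show "0 < r/2" using x by (auto simp: strip_def)
qed (use \<open>0 < n\<close> in simp)

lemma taylor1_bound_half_strip:
  assumes hol: "\<psi> holomorphic_on strip r" and bnd: "\<And>t. t \<in> strip r \<Longrightarrow> cmod (\<psi> t) \<le> K"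
    and "0 < r"
  shows "cmod (\<psi> (of_real s) - \<psi> 0 - deriv \<psi> 0 * of_real s) \<le> fact 2 * (K + 1) / (r/2)^2 * s^2"
proof -
  have sub: "strip (r/2) \<subseteq> strip r"
    using \<open>0 < r\<close> by (intro strip_mono) simp
  have "cmod ((deriv ^^ 0) \<psi> (of_real s) - (\<Sum>i\<le>1. (deriv ^^ i) \<psi> 0 * (of_real s - 0) ^ i / fact i))
      \<le> fact 2 * (K + 1) / (r/2)^2 * cmod (of_real s - 0) ^ Suc 1 / fact 1"
  proof (rule complex_Taylor[OF convex_strip])
    fix i :: nat and x assume "x \<in> strip (r/2)" "i \<le> 1"
    then have "x \<in> strip r" using sub by blast
    have "deriv \<psi> holomorphic_on strip r"
      by (rule holomorphic_deriv[OF hol open_strip])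
    then show "((deriv ^^ i) \<psi> has_field_derivative (deriv ^^ Suc i) \<psi> x) (at x within strip (r/2))"
      using \<open>i \<le> 1\<close> holomorphic_derivI[OF hol open_strip \<open>x \<in> strip r\<close>]
        holomorphic_derivI[OF _ open_strip \<open>x \<in> strip r\<close>, of "deriv \<psi>"]
      by (cases i) auto
  next
    fix x assume "x \<in> strip (r/2)"
    then show "cmod ((deriv ^^ Suc 1) \<psi> x) \<le> fact 2 * (K + 1) / (r/2)^2"
      using deriv_bound_half_strip[OF hol bnd, of x 2] by (simp add: numeral_2_eq_2)
  qed (use \<open>0 < r\<close> in \<open>auto simp: strip_def\<close>)
  then show ?thesis by (simp add: power2_eq_square diff_diff_eq)
qed

lemma holo2_line_restriction:
  assumes hol: "holo2_on (strip a \<times> strip a) g" and bnd: "\<And>z. z \<in> strip a \<times> strip a \<Longrightarrow> cmod (g z) \<le> K"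
    and "\<rho> < a" "w0 \<in> strip \<rho>" "w1 \<in> strip \<rho>" "\<bar>u0\<bar> \<le> 1" "\<bar>u1\<bar> \<le> 1"
  defines "\<psi> \<equiv> \<lambda>t. g (w0 + t * of_real u0, w1 + t * of_real u1)"
  shows "\<psi> holomorphic_on strip (a - \<rho>)" "\<And>t. t \<in> strip (a - \<rho>) \<Longrightarrow> cmod (\<psi> t) \<le> K"
    and "deriv \<psi> 0 = pd0 g (w0, w1) * of_real u0 + pd1 g (w0, w1) * of_real u1"
proof -
  have line: "(w0 + t * of_real u0, w1 + t * of_real u1) \<in> strip a \<times> strip a" if "t \<in> strip (a - \<rho>)" for t
    using add_mult_real_in_strip assms(4-7) that by blast
  show "\<psi> holomorphic_on strip (a - \<rho>)"
    unfolding \<psi>_def by (intro holomorphic_on_holo2_compose[OF hol] holomorphic_intros line)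
  show "cmod (\<psi> t) \<le> K" if "t \<in> strip (a - \<rho>)" for t
    unfolding \<psi>_def using bnd line that by blast
  have "(w0, w1) \<in> strip a \<times> strip a"
    using strip_mono[of \<rho> a] assms(3-5) by auto
  from has_field_derivative_holo2_line[OF hol this]
  show "deriv \<psi> 0 = pd0 g (w0, w1) * of_real u0 + pd1 g (w0, w1) * of_real u1"
    unfolding \<psi>_def by (rule DERIV_imp_deriv)
qed

lemma holo2_directional_deriv_bound:
  assumes "holo2_on (strip a \<times> strip a) g" "\<And>z. z \<in> strip a \<times> strip a \<Longrightarrow> cmod (g z) \<le> K"
    and "\<rho> < a" "w0 \<in> strip \<rho>" "w1 \<in> strip \<rho>" "\<bar>u0\<bar> \<le> 1" "\<bar>u1\<bar> \<le> 1"
  shows "cmod (pd0 g (w0, w1) * of_real u0 + pd1 g (w0, w1) * of_real u1) \<le> (K + 1) / ((a - \<rho>)/2)"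
  using deriv_bound_half_strip[OF holo2_line_restriction(1,2)[OF assms], of 0 1]
    holo2_line_restriction(3)[OF assms] \<open>\<rho> < a\<close>
  by (simp add: strip_def)

lemma holo2_taylor1_bound:
  assumes "holo2_on (strip a \<times> strip a) g" "\<And>z. z \<in> strip a \<times> strip a \<Longrightarrow> cmod (g z) \<le> K"
    and "\<rho> < a" "w0 \<in> strip \<rho>" "w1 \<in> strip \<rho>" "\<bar>u0\<bar> \<le> 1" "\<bar>u1\<bar> \<le> 1"
  shows "cmod (g (w0 + of_real (s * u0), w1 + of_real (s * u1)) - g (w0, w1)
                - (pd0 g (w0, w1) * of_real u0 + pd1 g (w0, w1) * of_real u1) * of_real s)
         \<le> 2 * (K + 1) / ((a - \<rho>)/2)^2 * s^2"
  using taylor1_bound_half_strip[OF holo2_line_restriction(1,2)[OF assms], of s]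
    holo2_line_restriction(3)[OF assms] \<open>\<rho> < a\<close>
  by (simp add: algebra_simps)

lemma cdot_ccross_add_tangent:
  "cdot (R + a *s P0 + b *s P1) (ccross P0 P1) = cdot R (ccross P0 P1)"
  unfolding cdot_def ccross_def sum_3 vector_3 by (simp add: vector_scalar_mult_def) algebra

lemma norm_ccross_nth_le:
  fixes x y :: "complex^3"
  assumes "\<And>j. cmod (x $ j) \<le> A" "\<And>j. cmod (y $ j) \<le> B"
  shows "cmod (ccross x y $ j) \<le> 2 * (A * B)"
proof -
  have "0 \<le> A" using assms(1) norm_ge_zero order_trans by blast
  then have prod: "cmod (x $ i * y $ k) \<le> A * B" for i k
    unfolding norm_mult using assms by (intro mult_mono) auto
  have "cmod (x $ i * y $ k - x $ i' * y $ k') \<le> 2 * (A * B)" for i k i' k'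
    using norm_triangle_ineq4[of "x $ i * y $ k" "x $ i' * y $ k'"] prod[of i k] prod[of i' k'] by simp
  then show ?thesis
    using exhaust_3[of j] by (auto simp: ccross_def)
qed

lemma norm_cdot_le:
  fixes x y :: "complex^3"
  assumes "\<And>j. cmod (x $ j) \<le> A" "\<And>j. cmod (y $ j) \<le> B"
  shows "cmod (cdot x y) \<le> 3 * (A * B)"
proof -
  have "0 \<le> A" using assms(1) norm_ge_zero order_trans by blast
  then have "cmod (x $ j * y $ j) \<le> A * B" for j
    unfolding norm_mult using assms by (intro mult_mono) auto
  then have "cmod (cdot x y) \<le> (\<Sum>j\<in>(UNIV :: 3 set). A * B)"
    unfolding cdot_def by (intro norm_sum[THEN order_trans] sum_mono)
  then show ?thesis by simp
qed

lemma cdot_chord_ccross_bound: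
  fixes G :: "complex \<times> complex \<Rightarrow> complex^3"
  assumes hol: "\<And>j. holo2_on (strip a \<times> strip a) (\<lambda>w. G w $ j)"
    and bnd: "\<And>z j. z \<in> strip a \<times> strip a \<Longrightarrow> cmod (G z $ j) \<le> K"
    and w: "\<rho> < a" "w0 \<in> strip \<rho>" "w1 \<in> strip \<rho>" and s: "\<bar>s0\<bar> \<le> r" "\<bar>s1\<bar> \<le> r"
  shows "cmod (cdot (G (w0 - of_real s0, w1 - of_real s1) - G (w0, w1)) (ccross (dG0 G (w0, w1)) (dG1 G (w0, w1))))
         \<le> 12 * (K + 1)^3 / ((a - \<rho>)/2)^4 * r^2"
proof -
  define \<delta> where "\<delta> = (a - \<rho>)/2"
  (* If r = 0 then s0 = s1 = 0, and u0 = u1 = 0 by the convention x / 0 = 0. *)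
  define u0 where "u0 = - s0 / r"
  define u1 where "u1 = - s1 / r"
  have u: "\<bar>u0\<bar> \<le> 1" "\<bar>u1\<bar> \<le> 1"
    using s by (auto simp: u0_def u1_def abs_div divide_le_eq_1)
  have su: "- s0 = r * u0" "- s1 = r * u1"
    using s by (auto simp: u0_def u1_def)
  define P0 where "P0 = dG0 G (w0, w1)"
  define P1 where "P1 = dG1 G (w0, w1)"
  define Rm where "Rm = G (w0 - of_real s0, w1 - of_real s1) - G (w0, w1)
                          - of_real (r * u0) *s P0 - of_real (r * u1) *s P1"
  have "cdot (G (w0 - of_real s0, w1 - of_real s1) - G (w0, w1)) (ccross P0 P1) = cdot Rm (ccross P0 P1)"
    using cdot_ccross_add_tangent[of Rm "of_real (r * u0)" P0 "of_real (r * u1)" P1]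
    by (simp add: Rm_def)
  also have "cmod \<dots> \<le> 3 * ((2 * (K + 1) / \<delta>^2 * r^2) * (2 * ((K + 1) / \<delta> * ((K + 1) / \<delta>))))"
  proof (intro norm_cdot_le norm_ccross_nth_le)
    fix j
    have "G (w0 - of_real s0, w1 - of_real s1) = G (w0 + of_real (r * u0), w1 + of_real (r * u1))"
      by (simp flip: su)
    then show "cmod (Rm $ j) \<le> 2 * (K + 1) / \<delta>^2 * r^2"
      using holo2_taylor1_bound[OF hol bnd w u, of r]
      by (simp add: Rm_def P0_def P1_def dG0_def dG1_def \<delta>_def algebra_simps)
    show "cmod (P0 $ j) \<le> (K + 1) / \<delta>"
      using holo2_directional_deriv_bound[OF hol bnd w, of 1 0] by (simp add: P0_def dG0_def \<delta>_def)
    show "cmod (P1 $ j) \<le> (K + 1) / \<delta>"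
      using holo2_directional_deriv_bound[OF hol bnd w, of 0 1] by (simp add: P1_def dG1_def \<delta>_def)
  qed
  also have "\<dots> = 12 * (K + 1)^3 / \<delta>^4 * r^2"
    by (simp add: field_simps power_def)
  finally show ?thesis by (simp add: P0_def P1_def \<delta>_def)
qed

lemma holo2_vec_periodic:
  fixes G :: "complex \<times> complex \<Rightarrow> complex^'n"
  assumes "0 < R" and hol: "\<And>j. holo2_on (strip R \<times> strip R) (\<lambda>w. G w $ j)"
    and per0: "\<And>x y. G (of_real (x + 2*pi), of_real y) = G (of_real x, of_real y)"
    and per1: "\<And>x y. G (of_real x, of_real (y + 2*pi)) = G (of_real x, of_real y)"
    and "w0 \<in> strip R" "w1 \<in> strip R"
  shows "G (w0 + of_real (2*pi), w1) = G (w0, w1)" "G (w0, w1 + of_real (2*pi)) = G (w0, w1)"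
proof -
  have "G (of_real (x + 2*pi), of_real y) $ j = G (of_real x, of_real y) $ j" for x y j
    by (simp only: per0)
  from holo2_periodic_fst[OF \<open>0 < R\<close> hol this]
  show "G (w0 + of_real (2*pi), w1) = G (w0, w1)"
    using assms(5,6) by (simp add: vec_eq_iff)
  have "G (of_real x, of_real (y + 2*pi)) $ j = G (of_real x, of_real y) $ j" for x y j
    by (simp only: per1)
  from holo2_periodic_snd[OF \<open>0 < R\<close> hol this]
  show "G (w0, w1 + of_real (2*pi)) = G (w0, w1)"
    using assms(5,6) by (simp add: vec_eq_iff)
qed

lemma holo2_vec_bounded_on_substrip:
  fixes G :: "complex \<times> complex \<Rightarrow> complex^'n"
  assumes "0 < a" "a < R" and hol: "\<And>j. holo2_on (strip R \<times> strip R) (\<lambda>w. G w $ j)"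
    and per0: "\<And>w0 w1. w0 \<in> strip R \<Longrightarrow> w1 \<in> strip R \<Longrightarrow>
      G (w0 + of_real (2*pi), w1) = G (w0, w1)"
    and per1: "\<And>w0 w1. w0 \<in> strip R \<Longrightarrow> w1 \<in> strip R \<Longrightarrow>
      G (w0, w1 + of_real (2*pi)) = G (w0, w1)"
  obtains K where "0 \<le> K" "\<And>z j. z \<in> strip a \<times> strip a \<Longrightarrow> cmod (G z $ j) \<le> K"
proof -
  have "continuous_on (strip R \<times> strip R) G"
    using continuous_on_vec_lambda[of _ "\<lambda>j w. G w $ j"] holo2_on_imp_continuous_on[OF hol] by simp
  from bounded_on_strip_if_periodic[OF this \<open>a < R\<close> per0 per1]
  obtain K where K: "\<And>z. z \<in> strip a \<times> strip a \<Longrightarrow> norm (G z) \<le> K"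
    by auto
  have "(0, 0) \<in> strip a \<times> strip a"
    using \<open>0 < a\<close> by (simp add: strip_def)
  then have "0 \<le> K"
    using K norm_ge_zero[of "G (0, 0)"] by (meson order_trans)
  moreover have "cmod (G z $ j) \<le> K" if "z \<in> strip a \<times> strip a" for z j
    by (rule order_trans[OF Finite_Cartesian_Product.norm_nth_le K[OF that]])
  ultimately show thesis by (rule that)
qed

lemma periodic_shift_le_zeta:
  assumes per0: "\<And>w0 w1. w0 \<in> strip R \<Longrightarrow> w1 \<in> strip R \<Longrightarrow>
      g (w0 + of_real (2*pi), w1) = g (w0, w1)"
    and per1: "\<And>w0 w1. w0 \<in> strip R \<Longrightarrow> w1 \<in> strip R \<Longrightarrow>
      g (w0, w1 + of_real (2*pi)) = g (w0, w1)"
    and "z0 \<in> strip R" "z1 \<in> strip R"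
  obtains s0 s1 where "\<bar>s0\<bar> \<le> zeta \<theta>" "\<bar>s1\<bar> \<le> zeta \<theta>"
    "g (z0, z1) = g (z0 + of_real (fst \<theta>) - of_real s0, z1 + of_real (snd \<theta>) - of_real s1)"
proof -
  define s where "s t = t - 2*pi * of_int (round (t/(2*pi)))" for t
  have "\<bar>s t\<bar> \<le> dist2pi t" for t
    unfolding s_def by (rule abs_sub_round_le_dist2pi)
  moreover have "dist2pi (fst \<theta>) \<le> zeta \<theta>" "dist2pi (snd \<theta>) \<le> zeta \<theta>"
    unfolding zeta_def by simp_all
  moreover from strip_periodic2_int[OF per0 per1 assms(3,4)]
  have "g (z0, z1) = g (z0 + of_real (fst \<theta>) - of_real (s (fst \<theta>)), z1 + of_real (snd \<theta>) - of_real (s (snd \<theta>)))"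
    by (simp add: s_def)
  ultimately show thesis
    by (meson order_trans that)
qed

lemma bstar_less_half:
  assumes "b < min (C0\<^sup>2 / (sqrt 2 * M0c G R0 * M1c G R0)) (R0 / 2)"
  shows "bstar G C0 R0 b < R0/2"
proof -
  define m where "m = min (C0\<^sup>2 / (sqrt 2 * M0c G R0 * M1c G R0)) (R0/2)"
  have "b < m" "m \<le> R0/2"
    unfolding m_def by (rule assms, rule min.cobounded2)
  then show ?thesis
    unfolding bstar_def m_def[symmetric] by argo
qed

theorem lemma3:
  fixes \<Gamma> :: "real \<times> real \<Rightarrow> real^3"
    and G :: "complex \<times> complex \<Rightarrow> complex^3"
    and C0 R0 b :: real
  assumes per0: "\<And>x y. \<Gamma> (x + 2*pi, y) = \<Gamma> (x, y)"
    and per1: "\<And>x y. \<Gamma> (x, y + 2*pi) = \<Gamma> (x, y)"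
    and diff: "\<And>t. \<Gamma> differentiable (at t)"
    and torus: "\<exists>\<Omega>. open \<Omega> \<and> bounded \<Omega> \<and> diffeomorphic_smooth \<Omega> solid_torus \<and>
                  frontier \<Omega> = \<Gamma> ` (I2pi \<times> I2pi) \<and> inj_on \<Gamma> (I2pi \<times> I2pi)"
    and A1: "C0 > 0"
            "\<And>\<theta> \<eta>. \<theta> \<in> I2pi \<times> I2pi \<Longrightarrow> \<eta> \<in> I2pi \<times> I2pi \<Longrightarrow>
                 norm (\<Gamma> \<theta> - \<Gamma> \<eta>) \<ge> C0 * zeta (\<theta> - \<eta>)"
    and A2: "R0 > 0"
            "\<exists>U. open U \<and> closure (strip R0 \<times> strip R0) \<subseteq> U \<and>
                 (\<forall>j. holo2_on U (\<lambda>w. G w $ j))"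
            "\<And>x y. G (complex_of_real x, complex_of_real y) = (\<chi> j. complex_of_real (\<Gamma> (x, y) $ j))"
    and b: "0 < b" "b < min (C0\<^sup>2 / (sqrt 2 * M0c G R0 * M1c G R0)) (R0 / 2)"
  shows "\<exists>c>0. \<forall>z \<in> strip (bstar G C0 R0 b) \<times> strip (bstar G C0 R0 b).
           \<forall>\<theta> \<in> I2pi \<times> I2pi.
             let z\<theta> = (fst z + complex_of_real (fst \<theta>), snd z + complex_of_real (snd \<theta>)) in
             cmod (cdot (G z - G z\<theta>) (ccross (dG0 G z\<theta>) (dG1 G z\<theta>))) \<le> c * (zeta \<theta>)\<^sup>2"
proof -
  have hol: "holo2_on (strip R0 \<times> strip R0) (\<lambda>w. G w $ j)" for j
    using A2(2) closure_subset holo2_on_subset by meson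
  have "G (of_real (x + 2*pi), of_real y) = G (of_real x, of_real y)"
    and "G (of_real x, of_real (y + 2*pi)) = G (of_real x, of_real y)" for x y
    by (simp_all only: A2(3) per0 per1)
  note G_per = holo2_vec_periodic[OF A2(1) hol this]
  obtain K where "0 \<le> K" and bnd: "\<And>z j. z \<in> strip (3*R0/4) \<times> strip (3*R0/4) \<Longrightarrow> cmod (G z $ j) \<le> K"
    by (rule holo2_vec_bounded_on_substrip[where a = "3*R0/4", OF _ _ hol G_per]) (use A2(1) in auto)
  have "strip (3*R0/4) \<subseteq> strip R0"
    using A2(1) by (intro strip_mono) simp
  then have hol': "holo2_on (strip (3*R0/4) \<times> strip (3*R0/4)) (\<lambda>w. G w $ j)" for j
    by (intro holo2_on_subset[OF hol]) auto
  have bstar_sub: "strip (bstar G C0 R0 b) \<subseteq> strip (R0/2)"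
    using bstar_less_half[OF b(2)] by (simp add: strip_mono)
  show ?thesis
  proof (intro exI[of _ "12 * (K + 1)^3 / (R0/8)^4"] conjI ballI)
    fix z and \<theta> :: "real \<times> real" assume "z \<in> strip (bstar G C0 R0 b) \<times> strip (bstar G C0 R0 b)"
    then have z: "fst z \<in> strip (R0/2)" "snd z \<in> strip (R0/2)"
      using bstar_sub by auto
    then have zR: "fst z \<in> strip R0" "snd z \<in> strip R0"
      using strip_mono[of "R0/2" R0] A2(1) by auto
    obtain s0 s1 where s: "\<bar>s0\<bar> \<le> zeta \<theta>" "\<bar>s1\<bar> \<le> zeta \<theta>"
      and Gz: "G (fst z, snd z) = G (fst z + of_real (fst \<theta>) - of_real s0, snd z + of_real (snd \<theta>) - of_real s1)"
      using periodic_shift_le_zeta[where g = G and \<theta> = \<theta>, OF G_per zR] by blast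
    have "fst z + of_real (fst \<theta>) \<in> strip (R0/2)" "snd z + of_real (snd \<theta>) \<in> strip (R0/2)"
      using z by simp_all
    from cdot_chord_ccross_bound[OF hol' bnd _ this s] A2(1)
    show "let z\<theta> = (fst z + of_real (fst \<theta>), snd z + of_real (snd \<theta>)) in
        cmod (cdot (G z - G z\<theta>) (ccross (dG0 G z\<theta>) (dG1 G z\<theta>))) \<le> 12 * (K + 1)^3 / (R0/8)^4 * (zeta \<theta>)\<^sup>2"
      by (simp add: Let_def flip: Gz)
  qed (use \<open>0 \<le> K\<close> A2(1) in simp)
qed

end
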